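(* Let $k \geq 2$ be an integer. (i) For all $k$-admissible integers $n > 1$ such that $n \not\equiv 1 \pmod{k}$, there is a partial $k$-star design of order $n$ with $2\lfloor \frac{n-2}{k}\rfloor$ stars that is not completable. (ii) For all $k$-admissible integers $n > 1$ such that $n \equiv 1 \pmod{k}$, there is a partial $k$-star design of order $n$ with $\frac{2n-2}{k}-1$ stars that is not completable.
   Context: A $k$-star is a copy of $K_{1,k}$. A partial $k$-star design of order $n$ is a pair $(V,\mathcal{A})$ where $V$ is a set of $n$ vertices and $\mathcal{A}$ is a set of edge-disjoint $k$-stars that are subgraphs of the complete graph $K_V$; if every edge of $K_V$ lies in some star of $\mathcal{A}$ it is a $k$-star design. It is completable if there is a $k$-star design $(V,\mathcal{B})$ with $\mathcal{A}\subseteq\mathcal{B}$. A positive integer $n$ is $k$-admissible if $\binom{n}{2}\equiv 0 \pmod{k}$. *)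

theory Defs
  imports Main
begin

definition all_edges :: "'a set \<Rightarrow> 'a set set" where
  "all_edges V = {{x, y} | x y. x \<in> V \<and> y \<in> V \<and> x \<noteq> y}"

definition is_kstar :: "nat \<Rightarrow> 'a set \<Rightarrow> 'a set set \<Rightarrow> bool" where
  "is_kstar k V S \<longleftrightarrow> (\<exists>c L. c \<in> V \<and> L \<subseteq> V \<and> c \<notin> L \<and> finite L \<and> card L = k
      \<and> S = {{c, x} | x. x \<in> L})"

definition partial_star_design :: "nat \<Rightarrow> 'a set \<Rightarrow> 'a set set set \<Rightarrow> bool" where
  "partial_star_design k V A \<longleftrightarrow> finite V \<and> (\<forall>S\<in>A. is_kstar k V S)
      \<and> (\<forall>S\<in>A. \<forall>T\<in>A. S \<noteq> T \<longrightarrow> S \<inter> T = {})"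

definition star_design :: "nat \<Rightarrow> 'a set \<Rightarrow> 'a set set set \<Rightarrow> bool" where
  "star_design k V A \<longleftrightarrow> partial_star_design k V A \<and> \<Union>A = all_edges V"

definition completable :: "nat \<Rightarrow> 'a set \<Rightarrow> 'a set set set \<Rightarrow> bool" where
  "completable k V A \<longleftrightarrow> (\<exists>B. star_design k V B \<and> A \<subseteq> B)"

definition admissible :: "nat \<Rightarrow> nat \<Rightarrow> bool" where
  "admissible k n \<longleftrightarrow> (n choose 2) mod k = 0"

end

theory Submission
  imports Defs
begin

text \<open>Stars centred at 0 and at 1 whose leaves run through consecutive blocks of k vertices
starting at 2 are edge-disjoint and leave the edge {0, 1} uncovered, while at each of 0 and 1
fewer than k edges stay uncovered. A star of a completion covering {0, 1} is centred at 0 or 1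
and would need k uncovered edges there. When n = 1 (mod k) exactly k edges stay uncovered at
0 and at 1; one more star, centred at the first vertex after the blocks and with leaves 0, 1 and
all later vertices, uses up one of them at each.\<close>

definition star_at :: "'a \<Rightarrow> 'a set \<Rightarrow> 'a set set" where
  "star_at c L = (\<lambda>x. {c, x}) ` L"

definition uncovered_at :: "'a set \<Rightarrow> 'a set set set \<Rightarrow> 'a \<Rightarrow> 'a set set" where
  "uncovered_at V A c = star_at c (V - {c}) - \<Union>A"

lemma card_star_at: "card (star_at c L) = card L"
  unfolding star_at_def by (rule card_image) (auto simp: inj_on_def doubleton_eq_iff)

lemma is_kstar_iff:
  "is_kstar k V S \<longleftrightarrow>
     (\<exists>c L. c \<in> V \<and> L \<subseteq> V \<and> c \<notin> L \<and> finite L \<and> card L = k \<and> S = star_at c L)"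
  unfolding is_kstar_def star_at_def by (simp add: Setcompr_eq_image)

lemma center_mem_if_edge_in_star_at:
  assumes "{u, v} \<in> star_at c L"
  shows "c = u \<or> c = v"
proof -
  obtain x where "{u, v} = {c, x}" using assms unfolding star_at_def by blast
  then have "c \<in> {u, v}" by blast
  then show ?thesis by blast
qed

lemma doubleton_notin_star_at:
  assumes "u \<noteq> c" and "u \<notin> L"
  shows "{u, v} \<notin> star_at c L"
proof
  assume "{u, v} \<in> star_at c L"
  then obtain x where "x \<in> L" and "{u, v} = {c, x}" unfolding star_at_def by blast
  then have "u \<in> {c, x}" by blast
  with assms \<open>x \<in> L\<close> show False by blast
qed

lemma star_at_Int_eq_empty:
  assumes "c' \<notin> L" and "c \<noteq> c' \<or> L \<inter> L' = {}"
  shows "star_at c L \<inter> star_at c' L' = {}"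
  using assms unfolding star_at_def by (auto simp: doubleton_eq_iff)

lemma star_at_eq_star_at_imp:
  assumes "star_at c L = star_at c' L'" and "L \<noteq> {}" and "c \<notin> L'"
  shows "c = c' \<and> L = L'"
proof -
  obtain x where "x \<in> L" using assms(2) by blast
  then have "{c, x} \<in> star_at c' L'" using assms(1) unfolding star_at_def by blast
  then have "c = c'" using assms(3) unfolding star_at_def by (auto simp: doubleton_eq_iff)
  moreover have "inj (\<lambda>x. {c, x})" by (auto simp: inj_on_def doubleton_eq_iff)
  ultimately show ?thesis using assms(1) unfolding star_at_def by (simp add: inj_image_eq_iff)
qed

lemma finite_uncovered_at: "finite V \<Longrightarrow> finite (uncovered_at V A c)"
  unfolding uncovered_at_def star_at_def by simp

lemma uncovered_at_insert: "uncovered_at V (insert S A) c = uncovered_at V A c - S"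
  unfolding uncovered_at_def by auto

lemma partial_star_design_insert:
  assumes "partial_star_design k V A" and "is_kstar k V S" and "S \<inter> \<Union>A = {}"
  shows "partial_star_design k V (insert S A)"
  using assms unfolding partial_star_design_def by blast

lemma not_completable_if_uncovered_edge:
  assumes A: "partial_star_design k V A" and uv: "{u, v} \<in> all_edges V - \<Union>A"
    and u: "card (uncovered_at V A u) < k" and v: "card (uncovered_at V A v) < k"
  shows "\<not> completable k V A"
proof
  assume "completable k V A"
  then obtain B where B: "star_design k V B" "A \<subseteq> B" unfolding completable_def by blast
  then obtain S where S: "S \<in> B" "{u, v} \<in> S" using uv unfolding star_design_def by blast
  have "is_kstar k V S" using B S unfolding star_design_def partial_star_design_def by blast
  then obtain c L where L: "L \<subseteq> V" "c \<notin> L" "card L = k" "S = star_at c L"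
    unfolding is_kstar_iff by blast
  have "S \<inter> T = {}" if "T \<in> A" for T
  proof -
    have "S \<noteq> T" using S(2) that uv by blast
    then show ?thesis using B S(1) that unfolding star_design_def partial_star_design_def by blast
  qed
  then have "S \<subseteq> uncovered_at V A c"
    using L unfolding uncovered_at_def star_at_def by blast
  moreover have "finite (uncovered_at V A c)"
    using A by (simp add: partial_star_design_def finite_uncovered_at)
  ultimately have "card S \<le> card (uncovered_at V A c)" by (rule card_mono[rotated])
  moreover have "card S = k" using L by (simp add: card_star_at)
  moreover have "c = u \<or> c = v" using S(2) unfolding L(4) by (rule center_mem_if_edge_in_star_at)
  ultimately show False using u v by auto
qed

definition block :: "nat \<Rightarrow> nat \<Rightarrow> nat set" where
  "block k i = {2 + i * k..<2 + (i + 1) * k}"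

definition block_stars :: "nat \<Rightarrow> nat \<Rightarrow> nat set set set" where
  "block_stars k a = (\<lambda>(c, i). star_at c (block k i)) ` ({0, 1} \<times> {..<a})"

lemma card_block: "card (block k i) = k"
  by (simp add: block_def)

lemma UN_block: "(\<Union>i<a. block k i) = {2..<2 + a * k}"
proof (induction a)
  case (Suc a)
  have "{2..<2 + a * k} \<union> block k a = {2..<2 + Suc a * k}"
    unfolding block_def by (simp add: ivl_disj_un_two(3))
  then show ?case using Suc by (simp add: lessThan_Suc Un_commute)
qed simp

lemma block_disjoint:
  assumes "i \<noteq> j"
  shows "block k i \<inter> block k j = {}"
proof -
  have "(i + 1) * k \<le> j * k \<or> (j + 1) * k \<le> i * k"
    using assms by (metis Suc_eq_plus1 linorder_neqE_nat mult_le_mono1 Suc_leI)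
  then show ?thesis unfolding block_def by auto
qed

lemma block_subset:
  assumes "i < a"
  shows "block k i \<subseteq> {2..<2 + a * k}"
proof -
  have "block k i \<subseteq> (\<Union>i<a. block k i)" using assms by blast
  then show ?thesis by (simp only: UN_block)
qed

lemma Union_block_stars:
  "\<Union>(block_stars k a) = star_at 0 {2..<2 + a * k} \<union> star_at 1 {2..<2 + a * k}"
  unfolding block_stars_def UN_block[symmetric] star_at_def by auto

lemma center_notin_block: "c \<in> {0, 1} \<Longrightarrow> c \<notin> block k i"
  by (auto simp: block_def)

lemma partial_star_design_block_stars:
  assumes "2 + a * k \<le> n"
  shows "partial_star_design k {..<n} (block_stars k a)"
  unfolding partial_star_design_def
proof (intro conjI ballI impI)
  fix S assume "S \<in> block_stars k a"
  then obtain c i where c: "c \<in> {0, 1}" and "i < a" and S: "S = star_at c (block k i)"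
    unfolding block_stars_def by blast
  have "block k i \<subseteq> {..<n}" using block_subset[OF \<open>i < a\<close>, of k] assms by auto
  moreover have "c \<in> {..<n}" using c assms by auto
  ultimately show "is_kstar k {..<n} S"
    unfolding is_kstar_iff using S center_notin_block[OF c] card_block[of k i]
    by (intro exI[of _ c] exI[of _ "block k i"]) (simp add: block_def)
next
  fix S T assume "S \<in> block_stars k a" "T \<in> block_stars k a" "S \<noteq> T"
  then obtain c i c' j where "c' \<in> {0, 1}" "S = star_at c (block k i)" "T = star_at c' (block k j)"
    "c \<noteq> c' \<or> i \<noteq> j"
    unfolding block_stars_def by auto
  then show "S \<inter> T = {}"
    using block_disjoint[of i j k] center_notin_block[of c' k i] by (simp add: star_at_Int_eq_empty)
qed simp

lemma card_block_stars:
  assumes "k > 0"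
  shows "card (block_stars k a) = 2 * a"
proof -
  have "inj_on (\<lambda>(c, i). star_at c (block k i)) ({0, 1} \<times> {..<a})"
  proof (rule inj_onI, clarify)
    fix c i c' j :: nat
    assume "c \<in> {0, 1}" and eq: "star_at c (block k i) = star_at c' (block k j)"
    moreover have "block k i \<noteq> {}" using assms by (simp add: block_def)
    ultimately have "c = c' \<and> block k i = block k j"
      using star_at_eq_star_at_imp center_notin_block by metis
    then show "c = c' \<and> i = j" using block_disjoint \<open>block k i \<noteq> {}\<close> by fastforce
  qed
  then show ?thesis unfolding block_stars_def by (simp add: card_image card_cartesian_product)
qed

lemma edge_01_in_all_edges: "2 \<le> n \<Longrightarrow> {0, 1} \<in> all_edges {..<n::nat}"
  unfolding all_edges_def by (intro CollectI exI[of _ 0] exI[of _ 1]) auto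

lemma edge_01_notin_Union_block_stars: "{0, 1} \<notin> \<Union>(block_stars k a)"
proof
  assume "{0, 1} \<in> \<Union>(block_stars k a)"
  then obtain c x :: nat where "2 \<le> x" and "{0, 1} = {c, x}"
    unfolding Union_block_stars star_at_def by auto
  then have "x \<in> {0, 1}" by blast
  with \<open>2 \<le> x\<close> show False by auto
qed

lemma card_uncovered_at_block_stars:
  assumes c: "c \<in> {0, 1}" and n: "2 + a * k \<le> n"
  shows "card (uncovered_at {..<n} (block_stars k a) c) \<le> n - (1 + a * k)"
proof -
  let ?R = "insert c {2..<2 + a * k}"
  have "uncovered_at {..<n} (block_stars k a) c \<subseteq> star_at c ({..<n} - ?R)"
    using c unfolding uncovered_at_def Union_block_stars star_at_def by auto
  then have "card (uncovered_at {..<n} (block_stars k a) c) \<le> card (star_at c ({..<n} - ?R))"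
    by (rule card_mono[rotated]) (simp add: star_at_def)
  also have "\<dots> = card {..<n} - card ?R"
    using c n by (subst card_star_at, intro card_Diff_subset) auto
  also have "\<dots> = n - (1 + a * k)"
    using c by (auto simp: card_insert_if)
  finally show ?thesis .
qed

lemma not_completable_block_stars:
  assumes "2 + a * k \<le> n" and "n < a * k + k + 1"
  shows "\<not> completable k {..<n} (block_stars k a)"
proof -
  have unc: "card (uncovered_at {..<n} (block_stars k a) c) < k" if "c \<in> {0, 1}" for c
    using card_uncovered_at_block_stars[OF that assms(1)] assms by linarith
  have "{0, 1} \<in> all_edges {..<n} - \<Union>(block_stars k a)"
    using edge_01_in_all_edges assms(1) edge_01_notin_Union_block_stars by simp
  from not_completable_if_uncovered_edge[OF partial_star_design_block_stars[OF assms(1)] this]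
  show ?thesis using unc by simp
qed

definition closing_star :: "nat \<Rightarrow> nat \<Rightarrow> nat \<Rightarrow> nat set set" where
  "closing_star k a n = star_at (2 + a * k) ({0, 1} \<union> {3 + a * k..<n})"

lemma is_kstar_closing_star:
  assumes "k \<ge> 2" and "n = a * k + k + 1"
  shows "is_kstar k {..<n} (closing_star k a n)"
proof -
  have "card ({0, 1} \<union> {3 + a * k..<n}) = k"
    using assms by (subst card_Un_disjoint) auto
  then show ?thesis
    unfolding is_kstar_iff closing_star_def using assms
    by (intro exI[of _ "2 + a * k"] exI[of _ "{0, 1} \<union> {3 + a * k..<n}"]) auto
qed

lemma closing_star_Int_Union_block_stars: "closing_star k a n \<inter> \<Union>(block_stars k a) = {}"
proof -
  have "star_at c {2..<2 + a * k} \<inter> closing_star k a n = {}" if "c \<in> {0, 1}" for c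
    using that unfolding closing_star_def by (intro star_at_Int_eq_empty) auto
  then show ?thesis unfolding Union_block_stars by blast
qed

lemma edge_01_notin_closing_star: "{0, 1} \<notin> closing_star k a n"
  using center_mem_if_edge_in_star_at unfolding closing_star_def by fastforce

lemma partial_star_design_insert_closing_star:
  assumes "k \<ge> 2" and "n = a * k + k + 1"
  shows "partial_star_design k {..<n} (insert (closing_star k a n) (block_stars k a))"
  using assms partial_star_design_block_stars[of a k n] is_kstar_closing_star[OF assms]
    closing_star_Int_Union_block_stars
  by (intro partial_star_design_insert) simp_all

lemma card_insert_closing_star:
  assumes "k > 0"
  shows "card (insert (closing_star k a n) (block_stars k a)) = 2 * a + 1"
proof -
  have "closing_star k a n \<noteq> {}" unfolding closing_star_def star_at_def by simp
  then have "closing_star k a n \<notin> block_stars k a"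
    using closing_star_Int_Union_block_stars by blast
  then show ?thesis using card_block_stars[OF assms] by (simp add: block_stars_def)
qed

lemma card_uncovered_at_insert_closing_star:
  assumes c: "c \<in> {0, 1}" and k: "k \<ge> 2" and n: "n = a * k + k + 1"
  shows "card (uncovered_at {..<n} (insert (closing_star k a n) (block_stars k a)) c) < k"
proof -
  let ?U = "uncovered_at {..<n} (block_stars k a) c" and ?w = "2 + a * k"
  have "{c, ?w} = {?w, c}" by (rule insert_commute)
  moreover have "{?w, c} \<notin> star_at c' {2..<?w}" if "c' \<in> {0, 1}" for c'
    using that by (intro doubleton_notin_star_at) auto
  ultimately have "{c, ?w} \<notin> \<Union>(block_stars k a)"
    unfolding Union_block_stars by simp
  moreover have "{c, ?w} \<in> star_at c ({..<n} - {c})"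
    using c k n unfolding star_at_def by (intro imageI) auto
  ultimately have "{c, ?w} \<in> ?U" unfolding uncovered_at_def by blast
  moreover have "{c, ?w} \<in> closing_star k a n"
    using c \<open>{c, ?w} = {?w, c}\<close> unfolding closing_star_def star_at_def by auto
  ultimately have "?U - closing_star k a n \<subset> ?U" by blast
  then have "card (?U - closing_star k a n) < card ?U"
    by (simp add: psubset_card_mono finite_uncovered_at)
  also have "card ?U \<le> k"
    using card_uncovered_at_block_stars[OF c, of a k n] n k by simp
  finally show ?thesis by (simp add: uncovered_at_insert)
qed

lemma not_completable_insert_closing_star:
  assumes "k \<ge> 2" and "n = a * k + k + 1"
  shows "\<not> completable k {..<n} (insert (closing_star k a n) (block_stars k a))"
proof -
  have "{0, 1} \<in> all_edges {..<n} - \<Union>(insert (closing_star k a n) (block_stars k a))"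
    using assms edge_01_in_all_edges edge_01_notin_Union_block_stars edge_01_notin_closing_star
    by simp
  from not_completable_if_uncovered_edge[OF partial_star_design_insert_closing_star[OF assms] this]
  show ?thesis using card_uncovered_at_insert_closing_star[OF _ assms] by simp
qed

lemma less_if_mod_ne_one:
  fixes n k :: nat
  assumes "0 < k" and "2 \<le> n" and "n mod k \<noteq> 1 mod k"
  shows "n < (n - 2) div k * k + k + 1"
proof (rule ccontr)
  let ?q = "(n - 2) div k" and ?r = "(n - 2) mod k"
  assume "\<not> ?thesis"
  moreover have "n = ?q * k + ?r + 2" using assms(2) div_mult_mod_eq[of "n - 2" k] by linarith
  moreover have "?r < k" using assms(1) by simp
  ultimately have "n = ?q * k + k + 1" by linarith
  then have "n = 1 + (?q + 1) * k" by simp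
  then have "n mod k = 1 mod k" by (metis mod_mult_self1)
  with assms(3) show False by contradiction
qed

lemma mod_eq_one_decompose:
  fixes n k :: nat
  assumes "2 \<le> k" and "1 < n" and "n mod k = 1 mod k"
  obtains a where "n = a * k + k + 1" and "(2 * n - 2) div k - 1 = 2 * a + 1"
proof -
  have "n = n div k * k + 1" using assms div_mult_mod_eq[of n k] by simp
  moreover have "n div k \<noteq> 0" using assms(2) calculation by (intro notI) simp
  ultimately obtain a where "n = a * k + k + 1" by (metis add.commute mult_Suc not0_implies_Suc)
  moreover have "(2 * n - 2) div k - 1 = 2 * a + 1" using assms(1) calculation by simp
  ultimately show ?thesis using that by blast
qed

theorem lemma3:
  fixes k :: nat
  assumes "k \<ge> 2"
  shows "(\<forall>n. admissible k n \<and> n > 1 \<and> n mod k \<noteq> 1 mod k \<longrightarrow>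
            (\<exists>(V :: nat set) A. card V = n \<and> partial_star_design k V A
               \<and> card A = 2 * ((n - 2) div k) \<and> \<not> completable k V A))
       \<and> (\<forall>n. admissible k n \<and> n > 1 \<and> n mod k = 1 mod k \<longrightarrow>
            (\<exists>(V :: nat set) A. card V = n \<and> partial_star_design k V A
               \<and> card A = (2 * n - 2) div k - 1 \<and> \<not> completable k V A))"
proof (intro conjI allI impI)
  \<comment> \<open>The constructions work for every order n.\<close>
  fix n assume n: "admissible k n \<and> n > 1 \<and> n mod k \<noteq> 1 mod k"
  define a where "a = (n - 2) div k"
  have "2 + a * k \<le> n"
    using n div_times_less_eq_dividend[of "n - 2" k] unfolding a_def by linarith
  moreover have "n < a * k + k + 1"
    using n assms less_if_mod_ne_one unfolding a_def by simp
  ultimately show "\<exists>(V :: nat set) A. card V = n \<and> partial_star_design k V A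
               \<and> card A = 2 * ((n - 2) div k) \<and> \<not> completable k V A"
    using partial_star_design_block_stars card_block_stars not_completable_block_stars assms
    unfolding a_def[symmetric] by (intro exI[of _ "{..<n}"] exI[of _ "block_stars k a"]) simp
next
  fix n assume "admissible k n \<and> n > 1 \<and> n mod k = 1 mod k"
  then obtain a where n: "n = a * k + k + 1" and card: "(2 * n - 2) div k - 1 = 2 * a + 1"
    using mod_eq_one_decompose assms by blast
  show "\<exists>(V :: nat set) A. card V = n \<and> partial_star_design k V A
               \<and> card A = (2 * n - 2) div k - 1 \<and> \<not> completable k V A"
    using partial_star_design_insert_closing_star[OF assms n] card_insert_closing_star
      not_completable_insert_closing_star[OF assms n] assms
    unfolding card
    by (intro exI[of _ "{..<n}"] exI[of _ "insert (closing_star k a n) (block_stars k a)"]) simp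
qed

end
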